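(* Let $U=f+g$ satisfy assumption (H1) and assume (H2), and assume $0<\int_{\mathbb{R}^d}e^{-U(x)}\,dx<\infty$. Let $\pi(x)=e^{-U(x)}/\int e^{-U}$ and, for $\lambda>0$, $\pi^\lambda(x)=e^{-U^\lambda(x)}/\int e^{-U^\lambda}$. Then $\lim_{\lambda\to0}\|\pi^\lambda-\pi\|_{TV}=0$.
   Context: Assumption (H1): $U=f+g$ where $f:\mathbb{R}^d\to\mathbb{R}$ and $g:\mathbb{R}^d\to(-\infty,+\infty]$ are both bounded from below; $f$ is convex, continuously differentiable, and $\nabla f$ is $L_f$-Lipschitz; $g$ is proper, convex and lower semicontinuous. Assumption (H2): at least one of: (i) $e^{-g}$ is Lebesgue integrable on $\mathbb{R}^d$; (ii) $g$ is Lipschitz. For $\lambda>0$, $g^\lambda(x)=\min_{y\in\mathbb{R}^d}\{g(y)+(2\lambda)^{-1}\|x-y\|^2\}$ (Moreau–Yosida envelope) and $U^\lambda=f+g^\lambda$. The total variation norm of two probability measures $\mu,\nu$ on $\mathbb{R}^d$ is $\|\mu-\nu\|_{TV}=\sup\{|\int h\,d\mu-\int h\,d\nu|: h \text{ Borel measurable},\ \sup|h|\le1\}$ (for densities this equals $\int|\mu(x)-\nu(x)|\,dx$). *)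

theory Defs
  imports "HOL-Analysis.Analysis"
begin

text \<open>Extended-real-valued functions g : R^d -> (-inf, +inf] are modelled as
  functions into ereal that never take the value -inf.\<close>

definition proper_ereal :: "('a \<Rightarrow> ereal) \<Rightarrow> bool" where
  "proper_ereal g \<longleftrightarrow> (\<forall>x. g x \<noteq> -\<infinity>) \<and> (\<exists>x. g x \<noteq> \<infinity>)"

text \<open>Convexity of an extended-real-valued function (standard convention 0 * inf = 0).\<close>
definition convex_ereal :: "('a::real_vector \<Rightarrow> ereal) \<Rightarrow> bool" where
  "convex_ereal g \<longleftrightarrow> (\<forall>x y t. 0 \<le> t \<and> t \<le> 1 \<longrightarrow>
      g ((1 - t) *\<^sub>R x + t *\<^sub>R y) \<le> ereal (1 - t) * g x + ereal t * g y)"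

definition lsc_ereal :: "('a::topological_space \<Rightarrow> ereal) \<Rightarrow> bool" where
  "lsc_ereal g \<longleftrightarrow> (\<forall>c. closed {x. g x \<le> c})"

definition expneg :: "ereal \<Rightarrow> real" where
  "expneg v = (if v = \<infinity> then 0 else exp (- real_of_ereal v))"

definition moreau_env :: "real \<Rightarrow> ('a::real_normed_vector \<Rightarrow> ereal) \<Rightarrow> 'a \<Rightarrow> ereal" where
  "moreau_env lam g x = (INF y. g y + ereal ((norm (x - y))\<^sup>2 / (2 * lam)))"

definition gibbs_density :: "('a::euclidean_space \<Rightarrow> ereal) \<Rightarrow> 'a \<Rightarrow> real" where
  "gibbs_density V x = expneg (V x) / enn2real (\<integral>\<^sup>+ y. ennreal (expneg (V y)) \<partial>lborel)"

definition tv_dist :: "('a::euclidean_space \<Rightarrow> real) \<Rightarrow> ('a \<Rightarrow> real) \<Rightarrow> ennreal" where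
  "tv_dist p q = (\<integral>\<^sup>+ x. ennreal \<bar>p x - q x\<bar> \<partial>lborel)"

end

theory Submission
  imports Defs "HOL-Real_Asymp.Real_Asymp"
begin

text \<open>As \<open>\<lambda> \<down> 0\<close> the Moreau-Yosida envelope \<open>g\<^sup>\<lambda>\<close> increases to \<open>g\<close> pointwise (by lower
  semicontinuity), so \<open>exp (- U\<^sup>\<lambda>)\<close> decreases to \<open>exp (- U)\<close>. As soon as one normalising
  constant \<open>Z\<^sup>\<lambda>\<close> is finite, monotone convergence gives \<open>Z\<^sup>\<lambda> \<rightarrow> Z\<close>, and since
  \<open>exp (- U) \<le> exp (- U\<^sup>\<lambda>)\<close> the total variation distance of the normalised densities is at most
  \<open>2 (Z\<^sup>\<lambda> - Z) / Z\<close>. Finiteness of \<open>Z\<^sup>\<lambda>\<close> comes from (H2): if \<open>g\<close> is \<open>L\<close>-Lipschitz then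
  \<open>g\<^sup>\<lambda> \<ge> g - L\<^sup>2 \<lambda> / 2\<close>; if \<open>exp (- g)\<close> is integrable, the sublevel sets of \<open>g\<close> are convex
  with finite measure, hence bounded, so \<open>g\<close> and with it \<open>g\<^sup>\<lambda>\<close> grow at least linearly.\<close>

lemma expneg_nonneg: "0 \<le> expneg v"
  by (simp add: expneg_def)

lemma expneg_ereal [simp]: "expneg (ereal r) = exp (- r)"
  by (simp add: expneg_def)

lemma expneg_le_exp_mult:
  assumes "w \<le> v + ereal c" "w \<noteq> -\<infinity>"
  shows "expneg v \<le> exp c * expneg w"
proof (cases v)
  case (real r)
  with assms obtain s where "w = ereal s" "s \<le> r + c"
    by (cases w) auto
  then show ?thesis
    using real by (simp add: mult_exp_exp)
qed (use assms in \<open>auto simp: expneg_def\<close>)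

lemma expneg_antimono: "v \<le> w \<Longrightarrow> v \<noteq> -\<infinity> \<Longrightarrow> expneg w \<le> expneg v"
  using expneg_le_exp_mult[of v w 0] by simp

lemma borel_measurable_expneg [measurable]: "expneg \<in> borel_measurable borel"
  unfolding expneg_def by measurable

lemma tendsto_expneg:
  assumes X: "(X \<longlongrightarrow> v) F" and v: "v \<noteq> -\<infinity>"
  shows "((\<lambda>n. expneg (X n)) \<longlongrightarrow> expneg v) F"
proof (cases v)
  case (real r)
  have "eventually (\<lambda>n. X n \<in> {ereal (r - 1) <..< ereal (r + 1)}) F"
    using X real by (intro topological_tendstoD) auto
  then have "eventually (\<lambda>n. exp (- real_of_ereal (X n)) = expneg (X n)) F"
    by eventually_elim (auto simp: expneg_def)
  moreover have "((\<lambda>n. exp (- real_of_ereal (X n))) \<longlongrightarrow> exp (- r)) F"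
    using X real by (intro tendsto_intros) simp
  ultimately show ?thesis
    using real by (simp add: Lim_transform_eventually)
next
  case PInf
  show ?thesis
  proof (rule tendstoI)
    fix e :: real
    assume e: "0 < e"
    have "eventually (\<lambda>n. X n \<in> {ereal (- ln e) <..}) F"
      using X PInf by (intro topological_tendstoD) auto
    then show "eventually (\<lambda>n. dist (expneg (X n)) (expneg v) < e) F"
    proof eventually_elim
      case (elim n)
      then show ?case
        using e PInf exp_less_cancel_iff[of "- real_of_ereal (X n)" "ln e"]
        by (cases "X n") (auto simp: expneg_def)
    qed
  qed
qed (use v in auto)

lemma nn_integral_expneg_add_le:
  assumes [measurable]: "V \<in> borel_measurable M"
    and V: "\<And>x. V x \<noteq> -\<infinity>" and f: "\<And>x. c \<le> f x"
  shows "(\<integral>\<^sup>+ x. ennreal (expneg (ereal (f x) + V x)) \<partial>M)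
           \<le> ennreal (exp (- c)) * (\<integral>\<^sup>+ x. ennreal (expneg (V x)) \<partial>M)"
proof -
  have "ennreal (expneg (ereal (f x) + V x)) \<le> ennreal (exp (- c)) * ennreal (expneg (V x))" for x
  proof -
    have "V x \<le> (ereal (f x) + V x) + ereal (- c)"
      using f[of x] V[of x] by (cases "V x") auto
    then have "expneg (ereal (f x) + V x) \<le> exp (- c) * expneg (V x)"
      using V[of x] by (rule expneg_le_exp_mult)
    then show ?thesis
      by (simp add: ennreal_mult[symmetric] expneg_nonneg ennreal_leI)
  qed
  then have "(\<integral>\<^sup>+ x. ennreal (expneg (ereal (f x) + V x)) \<partial>M)
               \<le> (\<integral>\<^sup>+ x. ennreal (exp (- c)) * ennreal (expneg (V x)) \<partial>M)"
    by (rule nn_integral_mono)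
  also have "\<dots> = ennreal (exp (- c)) * (\<integral>\<^sup>+ x. ennreal (expneg (V x)) \<partial>M)"
    by (rule nn_integral_cmult) measurable
  finally show ?thesis .
qed

section \<open>The Moreau-Yosida envelope\<close>

lemma moreau_env_le: "moreau_env lam g x \<le> g x"
proof -
  have "moreau_env lam g x \<le> g x + ereal ((norm (x - x))\<^sup>2 / (2 * lam))"
    unfolding moreau_env_def by (rule INF_lower) simp
  then show ?thesis
    by simp
qed

lemma moreau_env_antimono:
  assumes "0 < l1" "l1 \<le> l2"
  shows "moreau_env l2 g x \<le> moreau_env l1 g x"
  unfolding moreau_env_def
proof (rule INF_mono)
  fix y
  have "(norm (x - y))\<^sup>2 / (2 * l2) \<le> (norm (x - y))\<^sup>2 / (2 * l1)"
    using assms by (intro divide_left_mono) auto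
  then show "\<exists>y'\<in>UNIV. g y' + ereal ((norm (x - y'))\<^sup>2 / (2 * l2))
                        \<le> g y + ereal ((norm (x - y))\<^sup>2 / (2 * l1))"
    by (intro bexI[of _ y] add_left_mono) auto
qed

lemma mult_le_square_div_add:
  fixes L s lam :: real
  assumes "0 < lam"
  shows "L * s \<le> s\<^sup>2 / (2 * lam) + L\<^sup>2 * lam / 2"
proof -
  have "0 \<le> (s - L * lam)\<^sup>2 / (2 * lam)"
    using assms by simp
  also have "\<dots> = s\<^sup>2 / (2 * lam) + L\<^sup>2 * lam / 2 - L * s"
    using assms by (simp add: field_simps power2_eq_square)
  finally show ?thesis
    by simp
qed

lemma moreau_env_ge_lipschitz_minorant:
  assumes lam: "0 < lam"
    and minorant: "\<And>y. ereal (\<phi> y) \<le> g y"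
    and lip: "\<And>x y. \<phi> x - \<phi> y \<le> L * dist x y"
  shows "ereal (\<phi> x - L\<^sup>2 * lam / 2) \<le> moreau_env lam g x"
  unfolding moreau_env_def
proof (rule INF_greatest)
  fix y
  have "L * norm (x - y) \<le> (norm (x - y))\<^sup>2 / (2 * lam) + L\<^sup>2 * lam / 2"
    using lam by (rule mult_le_square_div_add)
  with lip[of x y] have "\<phi> x - L\<^sup>2 * lam / 2 \<le> \<phi> y + (norm (x - y))\<^sup>2 / (2 * lam)"
    by (simp add: dist_norm)
  then have "ereal (\<phi> x - L\<^sup>2 * lam / 2) \<le> ereal (\<phi> y) + ereal ((norm (x - y))\<^sup>2 / (2 * lam))"
    by simp
  also have "\<dots> \<le> g y + ereal ((norm (x - y))\<^sup>2 / (2 * lam))"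
    using minorant by (rule add_right_mono)
  finally show "ereal (\<phi> x - L\<^sup>2 * lam / 2) \<le> g y + ereal ((norm (x - y))\<^sup>2 / (2 * lam))" .
qed

lemma moreau_env_ge_const:
  assumes "0 < lam" "\<And>y. ereal m \<le> g y"
  shows "ereal m \<le> moreau_env lam g x"
  using moreau_env_ge_lipschitz_minorant[of lam "\<lambda>_. m" g 0] assms by simp

lemma moreau_env_ge_local_bound:
  assumes lam: "0 < lam" and d: "0 \<le> d"
    and near: "\<And>y. dist x y < d \<Longrightarrow> ereal c \<le> g y"
    and m: "\<And>y. ereal m \<le> g y"
  shows "min (ereal c) (ereal (m + d\<^sup>2 / (2 * lam))) \<le> moreau_env lam g x"
  unfolding moreau_env_def
proof (rule INF_greatest)
  fix y
  have q: "0 \<le> (norm (x - y))\<^sup>2 / (2 * lam)"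
    using lam by simp
  show "min (ereal c) (ereal (m + d\<^sup>2 / (2 * lam))) \<le> g y + ereal ((norm (x - y))\<^sup>2 / (2 * lam))"
  proof (cases "dist x y < d")
    case True
    then have "ereal c \<le> g y + ereal ((norm (x - y))\<^sup>2 / (2 * lam))"
      using near q by (metis add_increasing2 ereal_less_eq(5) order_trans)
    then show ?thesis
      by (simp add: min.coboundedI1)
  next
    case False
    then have "d\<^sup>2 \<le> (norm (x - y))\<^sup>2"
      using d by (intro power_mono) (auto simp: dist_norm)
    then have "d\<^sup>2 / (2 * lam) \<le> (norm (x - y))\<^sup>2 / (2 * lam)"
      using lam by (intro divide_right_mono) auto
    then have "ereal (m + d\<^sup>2 / (2 * lam)) \<le> ereal m + ereal ((norm (x - y))\<^sup>2 / (2 * lam))"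
      by simp
    also have "\<dots> \<le> g y + ereal ((norm (x - y))\<^sup>2 / (2 * lam))"
      using m by (rule add_right_mono)
    finally show ?thesis
      by (simp add: min.coboundedI2)
  qed
qed

lemma tendsto_moreau_env:
  assumes lsc: "lsc_ereal g" and m: "\<And>y. ereal m \<le> g y"
  shows "((\<lambda>lam. moreau_env lam g x) \<longlongrightarrow> g x) (at_right 0)"
proof (rule order_tendstoI)
  fix a
  assume "a < g x"
  then obtain b where b: "a < ereal b" "ereal b < g x"
    using ereal_dense2 by blast
  have "open (- {y. g y \<le> ereal b})" "x \<in> - {y. g y \<le> ereal b}"
    using lsc b(2) by (auto simp: lsc_ereal_def)
  then obtain d where d: "0 < d" "ball x d \<subseteq> - {y. g y \<le> ereal b}"
    using open_contains_ball by blast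
  then have near: "dist x y < d \<Longrightarrow> ereal b \<le> g y" for y
    by auto
  have "filterlim (\<lambda>lam. m + d\<^sup>2 / (2 * lam)) at_top (at_right 0)"
    using d(1) by real_asymp
  then have "eventually (\<lambda>lam. b \<le> m + d\<^sup>2 / (2 * lam)) (at_right 0)"
    by (simp add: filterlim_at_top)
  moreover have "eventually (\<lambda>lam. 0 < lam) (at_right (0::real))"
    by (simp add: eventually_at_right_less)
  ultimately show "eventually (\<lambda>lam. a < moreau_env lam g x) (at_right 0)"
  proof eventually_elim
    case (elim lam)
    then have "ereal b \<le> min (ereal b) (ereal (m + d\<^sup>2 / (2 * lam)))"
      by simp
    also have "\<dots> \<le> moreau_env lam g x"
      by (rule moreau_env_ge_local_bound) (use elim(2) d(1) near m in auto)
    finally show ?case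
      using b(1) by simp
  qed
next
  fix a
  assume "g x < a"
  then show "eventually (\<lambda>lam. moreau_env lam g x < a) (at_right 0)"
    by (intro always_eventually allI le_less_trans[OF moreau_env_le])
qed

lemma borel_measurable_lsc_ereal:
  fixes g :: "'a::topological_space \<Rightarrow> ereal"
  assumes "lsc_ereal g"
  shows "g \<in> borel_measurable borel"
  by (rule borel_measurableI_le) (use assms in \<open>auto simp: lsc_ereal_def intro!: borel_closed\<close>)

lemma borel_measurable_moreau_env:
  fixes g :: "'a::euclidean_space \<Rightarrow> ereal"
  assumes lam: "0 < lam"
  shows "moreau_env lam g \<in> borel_measurable borel"
proof (rule borel_measurableI_less)
  fix a :: ereal
  have "open {x. g z + ereal ((norm (x - z))\<^sup>2 / (2 * lam)) < a}" for z
  proof (cases "g z")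
    case (real r)
    have "open {x. r + (norm (x - z))\<^sup>2 / (2 * lam) < s}" for s
      using lam by (intro open_Collect_less continuous_intros) auto
    then show ?thesis
      using real by (cases a) auto
  qed auto
  moreover have "{x. moreau_env lam g x < a}
                   = (\<Union>z. {x. g z + ereal ((norm (x - z))\<^sup>2 / (2 * lam)) < a})"
    unfolding moreau_env_def by (auto simp: INF_less_iff)
  ultimately have "open {x. moreau_env lam g x < a}"
    by auto
  then show "{x \<in> space borel. moreau_env lam g x < a} \<in> sets borel"
    by auto
qed

section \<open>Convergence of Gibbs densities\<close>

lemma tendsto_nn_integral_at_right_0_mono:
  fixes F :: "real \<Rightarrow> 'a \<Rightarrow> ennreal"
  assumes meas: "\<And>lam. 0 < lam \<Longrightarrow> F lam \<in> borel_measurable M"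
    and mono: "\<And>l1 l2 x. 0 < l1 \<Longrightarrow> l1 \<le> l2 \<Longrightarrow> F l1 x \<le> F l2 x"
    and lim: "\<And>x. ((\<lambda>lam. F lam x) \<longlongrightarrow> F0 x) (at_right 0)"
    and l: "0 < l" and fin: "(\<integral>\<^sup>+ x. F l x \<partial>M) < \<infinity>"
  shows "((\<lambda>lam. \<integral>\<^sup>+ x. F lam x \<partial>M) \<longlongrightarrow> (\<integral>\<^sup>+ x. F0 x \<partial>M)) (at_right 0)"
proof -
  define \<Phi> where "\<Phi> lam = (\<integral>\<^sup>+ x. F lam x \<partial>M)" for lam
  define s where "s n = l / real (Suc n)" for n
  have s_pos: "0 < s n" and s_dec: "s (Suc n) \<le> s n" for n
    using l by (auto simp: s_def field_simps)
  have "s \<longlonglongrightarrow> 0"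
    unfolding s_def using LIMSEQ_Suc[OF lim_const_over_n[of l]] by simp
  then have s_lim: "filterlim s (at_right 0) sequentially"
    using s_pos by (intro tendsto_imp_filterlim_at_right) auto
  have F_dec: "decseq (\<lambda>n. F (s n) x)" for x
    using s_pos s_dec by (intro decseq_SucI mono)
  have F0_INF: "F0 x = (INF n. F (s n) x)" for x
    using filterlim_compose[OF lim s_lim] LIMSEQ_INF[OF F_dec] by (rule LIMSEQ_unique)
  have "(\<integral>\<^sup>+ x. F0 x \<partial>M) = (INF n. \<Phi> (s n))"
    unfolding F0_INF \<Phi>_def
  proof (rule nn_integral_monotone_convergence_INF_decseq)
    show "decseq (\<lambda>n. F (s n))"
      using s_pos s_dec by (intro decseq_SucI le_funI mono)
    show "F (s n) \<in> borel_measurable M" for n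
      using s_pos by (rule meas)
    show "(\<integral>\<^sup>+ x. F (s 0) x \<partial>M) < \<infinity>"
      using fin by (simp add: s_def)
  qed
  moreover have "decseq (\<lambda>n. \<Phi> (s n))"
    unfolding \<Phi>_def using F_dec by (auto simp: decseq_def intro: nn_integral_mono)
  ultimately have seq_lim: "(\<lambda>n. \<Phi> (s n)) \<longlonglongrightarrow> (\<integral>\<^sup>+ x. F0 x \<partial>M)"
    by (simp add: LIMSEQ_INF)
  text \<open>A monotone function has a one-sided limit; it is identified along the sequence \<open>s\<close>.\<close>
  have "(\<Phi> \<longlongrightarrow> Inf (\<Phi> ` {0<..})) (at_right 0)"
    using Lim_right_bound[of UNIV 0 \<Phi> 0] mono unfolding \<Phi>_def
    by (simp add: nn_integral_mono)
  moreover from this have "(\<lambda>n. \<Phi> (s n)) \<longlonglongrightarrow> Inf (\<Phi> ` {0<..})"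
    using s_lim by (rule filterlim_compose)
  ultimately show ?thesis
    using seq_lim LIMSEQ_unique unfolding \<Phi>_def by metis
qed

lemma nn_integral_abs_diff_normalized_le:
  fixes h h0 :: "'a \<Rightarrow> real"
  assumes [measurable]: "h \<in> borel_measurable M" "h0 \<in> borel_measurable M"
    and le: "\<And>x. 0 \<le> h0 x" "\<And>x. h0 x \<le> h x"
    and Zl: "(\<integral>\<^sup>+ x. ennreal (h x) \<partial>M) = ennreal zl"
    and Z0: "(\<integral>\<^sup>+ x. ennreal (h0 x) \<partial>M) = ennreal z0"
    and z: "0 < z0" "z0 \<le> zl"
  shows "(\<integral>\<^sup>+ x. ennreal \<bar>h x / zl - h0 x / z0\<bar> \<partial>M) \<le> ennreal (2 * (zl - z0) / z0)"
proof -
  have hnn: "0 \<le> h x" for x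
    using le[of x] by linarith
  have ih: "integrable M h"
    by (rule integrableI_nn_integral_finite[OF _ _ Zl]) (auto simp: hnn)
  have ih0: "integrable M h0"
    by (rule integrableI_nn_integral_finite[OF _ _ Z0]) (auto simp: le)
  have Ih: "integral\<^sup>L M h = zl"
    using nn_integral_eq_integral[OF ih] hnn Zl z integral_nonneg_AE[of h M]
    by (simp add: ennreal_inj)
  have Ih0: "integral\<^sup>L M h0 = z0"
    using nn_integral_eq_integral[OF ih0] le Z0 z integral_nonneg_AE[of h0 M]
    by (simp add: ennreal_inj)
  define F where "F x = (h x - h0 x) / zl + h0 x * (1 / z0 - 1 / zl)" for x
  have "1 / zl \<le> 1 / z0"
    using z by (intro divide_left_mono) auto
  then have Fnn: "0 \<le> F x" for x
    using le[of x] z unfolding F_def by (intro add_nonneg_nonneg mult_nonneg_nonneg divide_nonneg_pos) auto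
  have iF: "integrable M F"
    unfolding F_def using ih ih0 by auto
  have IF: "integral\<^sup>L M F = 2 * (zl - z0) / zl"
    unfolding F_def using ih ih0 z Ih Ih0 by (simp add: field_simps)
  have pointwise: "\<bar>h x / zl - h0 x / z0\<bar> \<le> F x" for x
  proof -
    have "h0 x / zl \<le> h0 x / z0" "h0 x / zl \<le> h x / zl"
      using z le[of x] by (auto intro: divide_left_mono divide_right_mono)
    moreover have "F x = (h x / zl - h0 x / zl) + (h0 x / z0 - h0 x / zl)"
      by (simp add: F_def diff_divide_distrib right_diff_distrib)
    ultimately show ?thesis
      by (simp add: abs_le_iff)
  qed
  have "(\<integral>\<^sup>+ x. ennreal \<bar>h x / zl - h0 x / z0\<bar> \<partial>M) \<le> (\<integral>\<^sup>+ x. ennreal (F x) \<partial>M)"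
    by (intro nn_integral_mono ennreal_leI pointwise)
  also have "\<dots> = ennreal (2 * (zl - z0) / zl)"
    using nn_integral_eq_integral[OF iF] Fnn IF by simp
  also have "\<dots> \<le> ennreal (2 * (zl - z0) / z0)"
    using z by (intro ennreal_leI divide_left_mono) auto
  finally show ?thesis .
qed

definition gibbs_const :: "('a::euclidean_space \<Rightarrow> ereal) \<Rightarrow> real" where
  "gibbs_const V = enn2real (\<integral>\<^sup>+ x. ennreal (expneg (V x)) \<partial>lborel)"

lemma tv_dist_gibbs_density_le:
  fixes V V0 :: "'a::euclidean_space \<Rightarrow> ereal"
  assumes [measurable]: "V \<in> borel_measurable borel" "V0 \<in> borel_measurable borel"
    and le: "\<And>x. V x \<le> V0 x" and ninf: "\<And>x. V x \<noteq> -\<infinity>"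
    and pos: "0 < (\<integral>\<^sup>+ x. ennreal (expneg (V0 x)) \<partial>lborel)"
    and fin: "(\<integral>\<^sup>+ x. ennreal (expneg (V x)) \<partial>lborel) < \<infinity>"
  shows "tv_dist (gibbs_density V) (gibbs_density V0)
           \<le> ennreal (2 * (gibbs_const V - gibbs_const V0) / gibbs_const V0)"
proof -
  have expneg_le: "expneg (V0 x) \<le> expneg (V x)" for x
    using le ninf by (rule expneg_antimono)
  have Z0_le: "(\<integral>\<^sup>+ x. ennreal (expneg (V0 x)) \<partial>lborel) \<le> (\<integral>\<^sup>+ x. ennreal (expneg (V x)) \<partial>lborel)"
    using expneg_le by (intro nn_integral_mono ennreal_leI)
  show ?thesis
    unfolding tv_dist_def gibbs_density_def gibbs_const_def[symmetric]
  proof (rule nn_integral_abs_diff_normalized_le)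
    show "(\<integral>\<^sup>+ x. ennreal (expneg (V x)) \<partial>lborel) = ennreal (gibbs_const V)"
      using fin by (simp add: gibbs_const_def)
    show "(\<integral>\<^sup>+ x. ennreal (expneg (V0 x)) \<partial>lborel) = ennreal (gibbs_const V0)"
      using Z0_le fin by (simp add: gibbs_const_def)
    show "0 < gibbs_const V0"
      using pos Z0_le fin by (simp add: gibbs_const_def enn2real_positive_iff)
    show "gibbs_const V0 \<le> gibbs_const V"
      using Z0_le fin by (simp add: gibbs_const_def enn2real_mono)
  qed (use expneg_le in \<open>auto simp: expneg_nonneg\<close>)
qed

lemma tendsto_tv_dist_gibbs_density:
  fixes V :: "real \<Rightarrow> 'a::euclidean_space \<Rightarrow> ereal" and V0 :: "'a \<Rightarrow> ereal"
  assumes meas: "\<And>lam. 0 < lam \<Longrightarrow> V lam \<in> borel_measurable borel"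
    and meas0 [measurable]: "V0 \<in> borel_measurable borel"
    and ninf: "\<And>lam x. 0 < lam \<Longrightarrow> V lam x \<noteq> -\<infinity>"
    and mono: "\<And>l1 l2 x. 0 < l1 \<Longrightarrow> l1 \<le> l2 \<Longrightarrow> V l2 x \<le> V l1 x"
    and lim: "\<And>x. ((\<lambda>lam. V lam x) \<longlongrightarrow> V0 x) (at_right 0)"
    and pos: "0 < (\<integral>\<^sup>+ x. ennreal (expneg (V0 x)) \<partial>lborel)"
    and l: "0 < l" and fin: "(\<integral>\<^sup>+ x. ennreal (expneg (V l x)) \<partial>lborel) < \<infinity>"
  shows "((\<lambda>lam. tv_dist (gibbs_density (V lam)) (gibbs_density V0)) \<longlongrightarrow> 0) (at_right 0)"
proof -
  define Z where "Z U = (\<integral>\<^sup>+ x. ennreal (expneg (U x)) \<partial>lborel)" for U :: "'a \<Rightarrow> ereal"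
  have V_le: "V lam x \<le> V0 x" if "0 < lam" for lam x
  proof (rule tendsto_lowerbound[OF lim])
    show "eventually (\<lambda>l'. V lam x \<le> V l' x) (at_right 0)"
      using eventually_at_right_real[OF that] by eventually_elim (auto intro: mono)
  qed simp
  have "Z (V lam) \<le> Z (V l)" if "0 < lam" "lam \<le> l" for lam
    unfolding Z_def using that by (intro nn_integral_mono ennreal_leI expneg_antimono mono ninf) auto
  then have fin_le: "Z (V lam) < \<infinity>" if "0 < lam" "lam \<le> l" for lam
    using that fin unfolding Z_def by (meson le_less_trans)
  have "Z V0 \<le> Z (V l)"
    unfolding Z_def using V_le[OF l] ninf[OF l] by (intro nn_integral_mono ennreal_leI expneg_antimono)
  then have Z0_fin: "Z V0 < \<infinity>"
    using fin by (simp add: Z_def le_less_trans)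
  then have const_pos: "0 < gibbs_const V0"
    using pos by (simp add: Z_def gibbs_const_def enn2real_positive_iff)
  have "((\<lambda>lam. Z (V lam)) \<longlongrightarrow> Z V0) (at_right 0)"
    unfolding Z_def
  proof (rule tendsto_nn_integral_at_right_0_mono[where l = l])
    show "(\<lambda>x. ennreal (expneg (V lam x))) \<in> borel_measurable lborel" if "0 < lam" for lam
      using meas[OF that] by measurable
    show "ennreal (expneg (V l1 x)) \<le> ennreal (expneg (V l2 x))" if "0 < l1" "l1 \<le> l2" for l1 l2 x
      using that by (intro ennreal_leI expneg_antimono mono ninf) auto
    show "((\<lambda>lam. ennreal (expneg (V lam x))) \<longlongrightarrow> ennreal (expneg (V0 x))) (at_right 0)" for x
      using V_le[OF l, of x] ninf[OF l, of x]
      by (intro tendsto_ennrealI tendsto_expneg lim) auto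
  qed (use l fin in auto)
  then have "((\<lambda>lam. gibbs_const (V lam)) \<longlongrightarrow> gibbs_const V0) (at_right 0)"
    using Z0_fin unfolding gibbs_const_def Z_def by (intro tendsto_enn2real) auto
  then have "((\<lambda>lam. 2 * (gibbs_const (V lam) - gibbs_const V0) / gibbs_const V0)
               \<longlongrightarrow> 2 * (gibbs_const V0 - gibbs_const V0) / gibbs_const V0) (at_right 0)"
    using const_pos by (intro tendsto_intros) simp_all
  then have bound_lim: "((\<lambda>lam. ennreal (2 * (gibbs_const (V lam) - gibbs_const V0) / gibbs_const V0))
                          \<longlongrightarrow> 0) (at_right 0)"
    unfolding diff_self mult_zero_right div_0 ennreal_0[symmetric] by (rule tendsto_ennrealI)
  have "eventually (\<lambda>lam. tv_dist (gibbs_density (V lam)) (gibbs_density V0)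
          \<le> ennreal (2 * (gibbs_const (V lam) - gibbs_const V0) / gibbs_const V0)) (at_right 0)"
    using eventually_at_right_real[OF l]
  proof eventually_elim
    case (elim lam)
    then show ?case
      using meas V_le ninf pos fin_le unfolding Z_def by (intro tv_dist_gibbs_density_le) auto
  qed
  then show ?thesis
    by (rule tendsto_sandwich[OF always_eventually[OF allI[OF zero_le]] _ tendsto_const bound_lim])
qed

section \<open>Linear growth of convex functions with integrable \<open>exp (- g)\<close>\<close>

lemma convex_sublevel_convex_ereal:
  assumes "convex_ereal g"
  shows "convex {x. g x \<le> ereal c}"
proof (rule convexI)
  fix x y :: 'a and u v :: real
  assume xy: "x \<in> {x. g x \<le> ereal c}" "y \<in> {x. g x \<le> ereal c}"
    and uv: "0 \<le> u" "0 \<le> v" "u + v = 1"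
  have "g ((1 - v) *\<^sub>R x + v *\<^sub>R y) \<le> ereal (1 - v) * g x + ereal v * g y"
    using assms uv unfolding convex_ereal_def by auto
  also have "\<dots> \<le> ereal (1 - v) * ereal c + ereal v * ereal c"
    using xy uv by (intro add_mono ereal_mult_left_mono) auto
  also have "\<dots> = ereal c"
    by (simp add: algebra_simps)
  finally show "u *\<^sub>R x + v *\<^sub>R y \<in> {x. g x \<le> ereal c}"
    using uv by (simp add: eq_diff_eq[symmetric])
qed

lemma convex_ball_along_segment_subset:
  fixes S :: "'a::real_normed_vector set"
  assumes S: "convex S" "ball z r \<subseteq> S" "x \<in> S" and s: "0 \<le> s" "s < 1"
  shows "ball (z + s *\<^sub>R (x - z)) ((1 - s) * r) \<subseteq> S"
proof
  fix w
  define c where "c = z + s *\<^sub>R (x - z)"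
  assume "w \<in> ball (z + s *\<^sub>R (x - z)) ((1 - s) * r)"
  then have w: "norm (w - c) < (1 - s) * r"
    by (simp add: c_def dist_norm norm_minus_commute)
  define p where "p = z + (1 / (1 - s)) *\<^sub>R (w - c)"
  have "dist z p = norm (w - c) / (1 - s)"
    using s by (simp add: p_def dist_norm)
  also have "\<dots> < r"
    using w s by (simp add: pos_divide_less_eq mult.commute)
  finally have "p \<in> S"
    using S by auto
  moreover have "(1 - s) *\<^sub>R p = (1 - s) *\<^sub>R z + (w - c)"
    using s by (simp add: p_def scaleR_add_right)
  then have "w = (1 - s) *\<^sub>R p + s *\<^sub>R x"
    by (simp add: c_def algebra_simps)
  ultimately show "w \<in> S"
    using S s by (simp add: convexD)
qed

lemma convex_unbounded_disjoint_balls: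
  fixes S :: "'a::real_normed_vector set"
  assumes S: "convex S" "ball z r \<subseteq> S" "\<not> bounded S" and r: "0 < r"
  fixes N :: nat
  obtains c where "disjoint_family_on (\<lambda>k. ball (c k) (r / 2)) {..<N}"
    "\<And>k. k < N \<Longrightarrow> ball (c k) (r / 2) \<subseteq> S"
proof -
  obtain x where x: "x \<in> S" "2 * real N * r < dist z x"
    using S(3) unfolding bounded_any_center[of S z] by (meson not_le)
  define D where "D = norm (x - z)"
  have "0 \<le> 2 * real N * r"
    using r by simp
  then have D: "0 < D" "2 * real N * r < D"
    using x by (auto simp: D_def dist_norm norm_minus_commute)
  define c where "c k = z + (real k * r / D) *\<^sub>R (x - z)" for k :: nat
  have "ball (c k) (r / 2) \<subseteq> S" if "k < N" for k
  proof -
    have "real k * r \<le> real N * r"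
      using that r by (intro mult_right_mono) auto
    then have "real k * r \<le> D / 2"
      using D by linarith
    then have s: "0 \<le> real k * r / D" "real k * r / D \<le> 1 / 2"
      using r D by (simp_all add: divide_le_eq)
    have "1 / 2 * r \<le> (1 - real k * r / D) * r"
      using s r by (intro mult_right_mono) auto
    then have "ball (c k) (r / 2) \<subseteq> ball (c k) ((1 - real k * r / D) * r)"
      by (intro subset_ball) simp
    also have "\<dots> \<subseteq> S"
      unfolding c_def using S(1,2) x(1) s(1) by (rule convex_ball_along_segment_subset) (use s(2) in linarith)
    finally show ?thesis .
  qed
  moreover have "disjoint_family_on (\<lambda>k. ball (c k) (r / 2)) {..<N}"
    unfolding disjoint_family_on_def
  proof (intro ballI impI)
    fix j k
    assume "j \<in> {..<N}" "k \<in> {..<N}" "j \<noteq> k"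
    then have "1 \<le> \<bar>real j - real k\<bar>"
      by linarith
    have "c j - c k = ((real j - real k) * r / D) *\<^sub>R (x - z)"
      by (simp add: c_def algebra_simps diff_divide_distrib)
    then have "dist (c j) (c k) = \<bar>real j - real k\<bar> * r"
      using r D by (simp add: dist_norm D_def abs_mult)
    then have "r \<le> dist (c j) (c k)"
      using \<open>1 \<le> \<bar>real j - real k\<bar>\<close> r by simp
    show "ball (c j) (r / 2) \<inter> ball (c k) (r / 2) = {}"
    proof (rule ccontr)
      assume "ball (c j) (r / 2) \<inter> ball (c k) (r / 2) \<noteq> {}"
      then obtain y where "dist (c j) y < r / 2" "dist (c k) y < r / 2"
        by auto
      then show False
        using dist_triangle2[of "c j" "c k" y] \<open>r \<le> dist (c j) (c k)\<close> by linarith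
    qed
  qed
  ultimately show ?thesis
    using that by blast
qed

lemma bounded_convex_finite_emeasure:
  fixes S :: "'a::euclidean_space set"
  assumes S: "convex S" "S \<in> sets lborel"
    and pos: "0 < emeasure lborel S" and fin: "emeasure lborel S < \<infinity>"
  shows "bounded S"
proof (rule ccontr)
  assume unbounded: "\<not> bounded S"
  have "\<not> negligible S"
    using S(2) pos by (auto simp: negligible_iff_null_sets null_sets_completion_iff)
  then obtain z r where r: "0 < r" "ball z r \<subseteq> S"
    using negligible_convex_interior[OF S(1)] by (auto simp: mem_interior)
  define V where "V = unit_ball_vol (real DIM('a)) * (r / 2) ^ DIM('a)"
  have V: "0 < V"
    using r by (simp add: V_def)
  obtain M where M: "emeasure lborel S = ennreal M" "0 \<le> M"
    using fin by (cases "emeasure lborel S") auto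
  obtain N :: nat where N: "M < real N * V"
    using reals_Archimedean3[OF V] by blast
  obtain c where disj: "disjoint_family_on (\<lambda>k. ball (c k) (r / 2)) {..<N}"
    and sub: "\<And>k. k < N \<Longrightarrow> ball (c k) (r / 2) \<subseteq> S"
    using convex_unbounded_disjoint_balls[OF S(1) r(2) unbounded r(1)] by blast
  have "ennreal (real N * V) = (\<Sum>k<N. emeasure lborel (ball (c k) (r / 2)))"
    using r V by (simp add: emeasure_ball V_def ennreal_of_nat_eq_real_of_nat[symmetric] ennreal_mult)
  also have "\<dots> = emeasure lborel (\<Union>k<N. ball (c k) (r / 2))"
    using disj by (intro sum_emeasure) auto
  also have "\<dots> \<le> emeasure lborel S"
    using sub S(2) by (intro emeasure_mono) auto
  finally show False
    using M N V by (simp add: ennreal_le_iff)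
qed

lemma emeasure_sublevel_less_top:
  fixes g :: "'a::euclidean_space \<Rightarrow> ereal"
  assumes [measurable]: "g \<in> borel_measurable borel"
    and ninf: "\<And>x. g x \<noteq> -\<infinity>"
    and fin: "(\<integral>\<^sup>+ x. ennreal (expneg (g x)) \<partial>lborel) < \<infinity>"
  shows "emeasure lborel {x. g x \<le> ereal c} < \<infinity>"
proof -
  have "indicator {x. g x \<le> ereal c} x \<le> ennreal (exp c) * ennreal (expneg (g x))" for x
  proof (cases "g x \<le> ereal c")
    case True
    then have "expneg (ereal 0) \<le> exp c * expneg (g x)"
      using ninf[of x] by (intro expneg_le_exp_mult) auto
    then show ?thesis
      using True by (simp add: ennreal_mult[symmetric] expneg_nonneg)
  qed simp
  then have "emeasure lborel {x. g x \<le> ereal c}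
               \<le> (\<integral>\<^sup>+ x. ennreal (exp c) * ennreal (expneg (g x)) \<partial>lborel)"
    by (simp add: nn_integral_mono flip: nn_integral_indicator)
  also have "\<dots> = ennreal (exp c) * (\<integral>\<^sup>+ x. ennreal (expneg (g x)) \<partial>lborel)"
    by (rule nn_integral_cmult) measurable
  also have "\<dots> < \<infinity>"
    using fin by (simp add: ennreal_mult_less_top)
  finally show ?thesis .
qed

lemma ex_sublevel_emeasure_pos:
  fixes g :: "'a::euclidean_space \<Rightarrow> ereal"
  assumes [measurable]: "g \<in> borel_measurable borel"
    and pos: "0 < (\<integral>\<^sup>+ x. ennreal (expneg (g x)) \<partial>lborel)"
  shows "\<exists>c. 0 < emeasure lborel {x. g x \<le> ereal c}"
proof (rule ccontr)
  assume "\<nexists>c. 0 < emeasure lborel {x. g x \<le> ereal c}"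
  then have "{x. g x \<le> ereal c} \<in> null_sets lborel" for c
    by (auto simp: null_sets_def)
  then have "AE x in lborel. \<forall>n::nat. x \<notin> {x. g x \<le> ereal (real n)}"
    by (simp only: AE_all_countable) (blast intro: AE_not_in)
  then have "AE x in lborel. ennreal (expneg (g x)) = 0"
  proof eventually_elim
    case (elim x)
    then show ?case
    proof (cases "g x")
      case (real v)
      obtain n :: nat where "v \<le> real n"
        using real_arch_simple by blast
      then show ?thesis
        using elim real by auto
    qed (auto simp: expneg_def)
  qed
  then have "(\<integral>\<^sup>+ x. ennreal (expneg (g x)) \<partial>lborel) = 0"
    by (simp add: nn_integral_0_iff_AE)
  then show False
    using pos by simp
qed

text \<open>The point of the segment from \<open>z\<close> to \<open>x\<close> at distance \<open>R\<close> from \<open>z\<close> lies outside the sublevel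
  set; convexity along the segment then forces linear growth.\<close>

lemma convex_ereal_ge_outside_sublevel:
  fixes g :: "'a::real_normed_vector \<Rightarrow> ereal"
  assumes cvx: "convex_ereal g" and gz: "g z \<le> ereal c" "g z \<noteq> -\<infinity>"
    and sub: "{x. g x \<le> ereal (c + 1)} \<subseteq> ball z R" and far: "R \<le> dist z x"
  shows "ereal (c + dist z x / R) \<le> g x"
proof -
  have "g z \<le> ereal (c + 1)"
    using gz(1) by (rule order_trans) simp
  then have "z \<in> ball z R"
    using sub by auto
  then have R: "0 < R"
    by simp
  define D where "D = norm (x - z)"
  define t where "t = R / D"
  have D: "R \<le> D" "0 < D"
    using far R by (auto simp: D_def dist_norm norm_minus_commute)
  then have t: "0 < t" "t \<le> 1"
    using R by (auto simp: t_def)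
  define y where "y = (1 - t) *\<^sub>R z + t *\<^sub>R x"
  have "y - z = t *\<^sub>R (x - z)"
    by (simp add: y_def algebra_simps)
  then have "dist z y = R"
    using t D R by (simp add: dist_norm norm_minus_commute D_def t_def)
  then have "y \<notin> ball z R"
    by simp
  then have gy: "ereal (c + 1) < g y"
    using sub by (meson mem_Collect_eq not_le subsetD)
  have conv: "g y \<le> ereal (1 - t) * g z + ereal t * g x"
    using cvx t unfolding convex_ereal_def y_def by auto
  obtain gz' where gz': "g z = ereal gz'" "gz' \<le> c"
    using gz by (cases "g z") auto
  show ?thesis
  proof (cases "g x")
    case (real gx)
    have "ereal (c + 1) < ereal (1 - t) * g z + ereal t * g x"
      using gy conv by (rule less_le_trans)
    then have "c + 1 < (1 - t) * gz' + t * gx"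
      using real gz' by simp
    moreover have "(1 - t) * gz' \<le> (1 - t) * c"
      using gz' t by (intro mult_left_mono) auto
    ultimately have "1 < t * (gx - c)"
      by (simp add: algebra_simps)
    then have "D / R < gx - c"
      using R D by (simp add: t_def field_simps)
    then show ?thesis
      using real by (simp add: D_def dist_norm norm_minus_commute)
  next
    case MInf
    then show ?thesis
      using gy conv gz' t by simp
  qed simp
qed

lemma convex_ereal_linear_minorant:
  fixes g :: "'a::real_normed_vector \<Rightarrow> ereal"
  assumes cvx: "convex_ereal g" and m: "\<And>y. ereal m \<le> g y" and z: "g z \<le> ereal c"
    and sub: "{x. g x \<le> ereal (c + 1)} \<subseteq> ball z R"
  shows "\<exists>a>0. \<exists>b. \<forall>x. ereal (a * norm x - b) \<le> g x"
proof -
  have ninf: "g x \<noteq> -\<infinity>" for x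
    using m[of x] by auto
  have "g z \<le> ereal (c + 1)"
    using z by (rule order_trans) simp
  then have R: "0 < R"
    using sub by force
  define b where "b = max (norm z / R - c) ((norm z + R) / R - m)"
  have "ereal (1 / R * norm x - b) \<le> g x" for x
  proof -
    have norm_x: "norm x \<le> norm z + dist z x"
      by (metis dist_commute dist_norm norm_triangle_sub)
    show ?thesis
    proof (cases "R \<le> dist z x")
      case True
      have "norm x / R \<le> norm z / R + dist z x / R"
        using norm_x R by (simp add: add_divide_distrib[symmetric] divide_right_mono)
      then have "1 / R * norm x - b \<le> c + dist z x / R"
        by (simp add: b_def)
      also have "ereal \<dots> \<le> g x"
        using cvx z ninf sub True by (rule convex_ereal_ge_outside_sublevel)
      finally show ?thesis
        by simp
    next
      case False
      then have "norm x / R \<le> (norm z + R) / R"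
        using norm_x R by (intro divide_right_mono) auto
      then have "1 / R * norm x - b \<le> m"
        by (simp add: b_def)
      then show ?thesis
        using m[of x] by (metis ereal_less_eq(3) order.trans)
    qed
  qed
  then show ?thesis
    using R by (intro exI[of _ "1 / R"] conjI exI[of _ b]) auto
qed

lemma convex_ereal_coercive:
  fixes g :: "'a::euclidean_space \<Rightarrow> ereal"
  assumes cvx: "convex_ereal g" and lsc: "lsc_ereal g" and m: "\<And>y. ereal m \<le> g y"
    and fin: "(\<integral>\<^sup>+ x. ennreal (expneg (g x)) \<partial>lborel) < \<infinity>"
    and pos: "0 < (\<integral>\<^sup>+ x. ennreal (expneg (g x)) \<partial>lborel)"
  shows "\<exists>a>0. \<exists>b. \<forall>x. ereal (a * norm x - b) \<le> g x"
proof -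
  have g_meas [measurable]: "g \<in> borel_measurable borel"
    using lsc by (rule borel_measurable_lsc_ereal)
  have ninf: "g x \<noteq> -\<infinity>" for x
    using m[of x] by auto
  define S where "S c = {x. g x \<le> ereal c}" for c
  have S_sets: "S c \<in> sets lborel" for c
    using lsc by (auto simp: S_def lsc_ereal_def intro: borel_closed)
  obtain c where c: "0 < emeasure lborel (S c)"
    using ex_sublevel_emeasure_pos[OF g_meas pos] by (auto simp: S_def)
  then obtain z where z: "g z \<le> ereal c"
    by (metis S_def emeasure_empty equals0I less_irrefl mem_Collect_eq)
  have "S c \<subseteq> S (c + 1)"
    by (auto simp: S_def intro: order_trans)
  then have "0 < emeasure lborel (S (c + 1))"
    using c emeasure_mono[OF _ S_sets] by (metis order_less_le_trans)
  then have "bounded (S (c + 1))"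
    using S_sets emeasure_sublevel_less_top[OF g_meas ninf fin]
    by (intro bounded_convex_finite_emeasure) (auto simp: S_def convex_sublevel_convex_ereal[OF cvx])
  then obtain R where "S (c + 1) \<subseteq> ball z R"
    using bounded_subset_ballD by blast
  then show ?thesis
    using cvx m z unfolding S_def by (intro convex_ereal_linear_minorant)
qed

section \<open>Finite normalising constants for the envelope\<close>

lemma summable_exp_neg_mult_poly:
  fixes a :: real
  assumes a: "0 < a"
  shows "summable (\<lambda>k::nat. exp (- a * real k) * (real k + 1) ^ d)"
proof (rule summable_comparison_test_bigo)
  have "summable (\<lambda>k::nat. exp (- a / 2) ^ k)"
    using a by (intro summable_geometric) simp
  then show "summable (\<lambda>k::nat. norm (exp (- a / 2 * real k)))"
    by (simp add: exp_of_nat_mult[symmetric] mult.commute)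
  show "(\<lambda>k::nat. exp (- a * real k) * (real k + 1) ^ d) \<in> O(\<lambda>k. exp (- a / 2 * real k))"
    using a by real_asymp
qed

text \<open>Cover \<open>\<real>\<^sup>n\<close> by the balls of radius \<open>k + 1\<close>; on the \<open>k\<close>-th shell the integrand is at most
  \<open>exp (- a k)\<close> while the volume grows polynomially in \<open>k\<close>.\<close>

lemma nn_integral_exp_neg_norm_finite:
  fixes a :: real
  assumes a: "0 < a"
  shows "(\<integral>\<^sup>+ x. ennreal (exp (- a * norm (x::'a::euclidean_space))) \<partial>lborel) < \<infinity>"
proof -
  define U where "U = unit_ball_vol (real DIM('a))"
  define B where "B k = ball (0::'a) (real k + 1)" for k :: nat
  have [measurable]: "B k \<in> sets borel" for k
    by (simp add: B_def)
  have le: "ennreal (exp (- a * norm x)) \<le> (\<Sum>k. ennreal (exp (- a * real k)) * indicator (B k) x)"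
    for x :: 'a
  proof -
    define k where "k = nat \<lfloor>norm x\<rfloor>"
    have "real k \<le> norm x" "norm x < real k + 1"
      by (auto simp: k_def)
    then have "ennreal (exp (- a * norm x)) \<le> ennreal (exp (- a * real k)) * indicator (B k) x"
      using a by (auto simp: B_def indicator_def intro!: ennreal_leI)
    also have "\<dots> \<le> (\<Sum>j. ennreal (exp (- a * real j)) * indicator (B j) x)"
      (is "?F k \<le> suminf ?F")
    proof -
      have "?F k = sum ?F {k}"
        by (simp only: sum.insert finite.emptyI empty_iff not_False_eq_True sum.empty add_0_right)
      also have "\<dots> \<le> suminf ?F"
        by (intro sum_le_suminf) auto
      finally show ?thesis .
    qed
    finally show ?thesis .
  qed
  have "(\<integral>\<^sup>+ x. ennreal (exp (- a * norm (x::'a))) \<partial>lborel)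
          \<le> (\<integral>\<^sup>+ x. (\<Sum>k. ennreal (exp (- a * real k)) * indicator (B k) x) \<partial>lborel)"
    by (intro nn_integral_mono le)
  also have "\<dots> = (\<Sum>k. \<integral>\<^sup>+ x. ennreal (exp (- a * real k)) * indicator (B k) x \<partial>lborel)"
    by (intro nn_integral_suminf) measurable
  also have "\<dots> = (\<Sum>k. ennreal (exp (- a * real k) * (U * (real k + 1) ^ DIM('a))))"
    by (simp add: B_def nn_integral_cmult_indicator emeasure_ball U_def ennreal_mult' add_nonneg_nonneg)
  also have "\<dots> = ennreal (\<Sum>k. exp (- a * real k) * (U * (real k + 1) ^ DIM('a)))"
  proof (rule suminf_ennreal2)
    have "summable (\<lambda>k. exp (- a * real k) * (real k + 1) ^ DIM('a) * U)"
      by (rule summable_mult2[OF summable_exp_neg_mult_poly[OF a]])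
    then show "summable (\<lambda>k. exp (- a * real k) * (U * (real k + 1) ^ DIM('a)))"
      by (simp only: mult_ac)
  qed (auto simp: U_def)
  also have "\<dots> < \<infinity>"
    by simp
  finally show ?thesis .
qed

lemma nn_integral_expneg_moreau_env_finite:
  fixes g :: "'a::euclidean_space \<Rightarrow> ereal"
  assumes cvx: "convex_ereal g" and lsc: "lsc_ereal g" and m: "\<And>y. ereal m \<le> g y"
    and fin: "(\<integral>\<^sup>+ x. ennreal (expneg (g x)) \<partial>lborel) < \<infinity>"
    and pos: "0 < (\<integral>\<^sup>+ x. ennreal (expneg (g x)) \<partial>lborel)"
    and lam: "0 < lam"
  shows "(\<integral>\<^sup>+ x. ennreal (expneg (moreau_env lam g x)) \<partial>lborel) < \<infinity>"
proof -
  obtain a b where a: "0 < a" and ab: "\<And>x. ereal (a * norm x - b) \<le> g x"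
    using convex_ereal_coercive[OF cvx lsc m fin pos] by blast
  define C where "C = b + a\<^sup>2 * lam / 2"
  have "ennreal (expneg (moreau_env lam g x)) \<le> ennreal (exp C) * ennreal (exp (- a * norm x))" for x
  proof -
    have "ereal (a * norm x - b - a\<^sup>2 * lam / 2) \<le> moreau_env lam g x"
    proof (rule moreau_env_ge_lipschitz_minorant[OF lam ab])
      show "a * norm x - b - (a * norm y - b) \<le> a * dist x y" for x y :: 'a
        using a norm_triangle_ineq2[of x y] by (simp add: dist_norm flip: right_diff_distrib)
    qed
    then have "ereal (a * norm x) \<le> moreau_env lam g x + ereal C"
      by (cases "moreau_env lam g x") (auto simp: C_def)
    then have "expneg (moreau_env lam g x) \<le> exp C * expneg (ereal (a * norm x))"
      by (rule expneg_le_exp_mult) simp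
    then show ?thesis
      by (simp add: ennreal_mult[symmetric] expneg_nonneg ennreal_leI)
  qed
  then have "(\<integral>\<^sup>+ x. ennreal (expneg (moreau_env lam g x)) \<partial>lborel)
               \<le> (\<integral>\<^sup>+ x. ennreal (exp C) * ennreal (exp (- a * norm (x::'a))) \<partial>lborel)"
    by (rule nn_integral_mono)
  also have "\<dots> = ennreal (exp C) * (\<integral>\<^sup>+ x. ennreal (exp (- a * norm (x::'a))) \<partial>lborel)"
    by (rule nn_integral_cmult) measurable
  also have "\<dots> < \<infinity>"
    using nn_integral_exp_neg_norm_finite[OF a, where 'a='a] by (simp add: ennreal_mult_less_top)
  finally show ?thesis .
qed

lemma nn_integral_expneg_moreau_env_le_lipschitz:
  fixes f :: "'a::euclidean_space \<Rightarrow> real" and g :: "'a \<Rightarrow> ereal"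
  assumes [measurable]: "f \<in> borel_measurable borel" "g \<in> borel_measurable borel"
    and finite: "\<And>x. \<bar>g x\<bar> \<noteq> \<infinity>"
    and lip: "\<And>x y. \<bar>real_of_ereal (g x) - real_of_ereal (g y)\<bar> \<le> L * dist x y"
    and lam: "0 < lam"
  shows "(\<integral>\<^sup>+ x. ennreal (expneg (ereal (f x) + moreau_env lam g x)) \<partial>lborel)
           \<le> ennreal (exp (L\<^sup>2 * lam / 2)) * (\<integral>\<^sup>+ x. ennreal (expneg (ereal (f x) + g x)) \<partial>lborel)"
proof -
  have "ennreal (expneg (ereal (f x) + moreau_env lam g x))
          \<le> ennreal (exp (L\<^sup>2 * lam / 2)) * ennreal (expneg (ereal (f x) + g x))" for x
  proof -
    have g_eq: "g y = ereal (real_of_ereal (g y))" for y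
      using finite[of y] by (cases "g y") auto
    have "ereal (real_of_ereal (g x) - L\<^sup>2 * lam / 2) \<le> moreau_env lam g x"
      using lam g_eq lip by (intro moreau_env_ge_lipschitz_minorant) (auto simp: abs_le_iff)
    then have "ereal (f x) + g x \<le> (ereal (f x) + moreau_env lam g x) + ereal (L\<^sup>2 * lam / 2)"
      by (subst g_eq, cases "moreau_env lam g x") auto
    then have "expneg (ereal (f x) + moreau_env lam g x) \<le> exp (L\<^sup>2 * lam / 2) * expneg (ereal (f x) + g x)"
      by (rule expneg_le_exp_mult) (use finite[of x] in auto)
    then show ?thesis
      by (simp add: ennreal_mult[symmetric] expneg_nonneg ennreal_leI)
  qed
  then have "(\<integral>\<^sup>+ x. ennreal (expneg (ereal (f x) + moreau_env lam g x)) \<partial>lborel)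
       \<le> (\<integral>\<^sup>+ x. ennreal (exp (L\<^sup>2 * lam / 2)) * ennreal (expneg (ereal (f x) + g x)) \<partial>lborel)"
    by (rule nn_integral_mono)
  also have "\<dots> = ennreal (exp (L\<^sup>2 * lam / 2)) * (\<integral>\<^sup>+ x. ennreal (expneg (ereal (f x) + g x)) \<partial>lborel)"
    by (rule nn_integral_cmult) measurable
  finally show ?thesis .
qed

lemma nn_integral_expneg_add_moreau_env_finite:
  fixes f :: "'a::euclidean_space \<Rightarrow> real" and g :: "'a \<Rightarrow> ereal"
  assumes [measurable]: "f \<in> borel_measurable borel"
    and f: "\<And>x. c \<le> f x"
    and cvx: "convex_ereal g" and lsc: "lsc_ereal g" and m: "\<And>y. ereal m \<le> g y"
    and fin: "(\<integral>\<^sup>+ x. ennreal (expneg (g x)) \<partial>lborel) < \<infinity>"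
    and pos: "0 < (\<integral>\<^sup>+ x. ennreal (expneg (ereal (f x) + g x)) \<partial>lborel)"
    and lam: "0 < lam"
  shows "(\<integral>\<^sup>+ x. ennreal (expneg (ereal (f x) + moreau_env lam g x)) \<partial>lborel) < \<infinity>"
proof -
  have [measurable]: "g \<in> borel_measurable borel" "moreau_env lam g \<in> borel_measurable borel"
    using lsc lam by (auto intro: borel_measurable_lsc_ereal borel_measurable_moreau_env)
  have ninf: "g x \<noteq> -\<infinity>" "moreau_env lam g x \<noteq> -\<infinity>" for x
    using m[of x] moreau_env_ge_const[of lam m g x, OF lam m] by auto
  have "0 < (\<integral>\<^sup>+ x. ennreal (expneg (ereal (f x) + g x)) \<partial>lborel)"
    by (fact pos)
  also have "\<dots> \<le> ennreal (exp (- c)) * (\<integral>\<^sup>+ x. ennreal (expneg (g x)) \<partial>lborel)"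
    by (intro nn_integral_expneg_add_le ninf f) measurable
  finally have g_pos: "0 < (\<integral>\<^sup>+ x. ennreal (expneg (g x)) \<partial>lborel)"
    by (auto simp: zero_less_iff_neq_zero)
  have "(\<integral>\<^sup>+ x. ennreal (expneg (ereal (f x) + moreau_env lam g x)) \<partial>lborel)
          \<le> ennreal (exp (- c)) * (\<integral>\<^sup>+ x. ennreal (expneg (moreau_env lam g x)) \<partial>lborel)"
    by (intro nn_integral_expneg_add_le ninf f) measurable
  also have "\<dots> < \<infinity>"
    using nn_integral_expneg_moreau_env_finite[of g m lam] cvx lsc m fin g_pos lam
    by (simp add: ennreal_mult_less_top)
  finally show ?thesis .
qed

lemma tendsto_tv_dist_gibbs_moreau_env:
  fixes f :: "'a::euclidean_space \<Rightarrow> real" and g :: "'a \<Rightarrow> ereal"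
  assumes [measurable]: "f \<in> borel_measurable borel"
    and lsc: "lsc_ereal g" and m: "\<And>y. ereal m \<le> g y"
    and pos: "0 < (\<integral>\<^sup>+ x. ennreal (expneg (ereal (f x) + g x)) \<partial>lborel)"
    and l: "0 < l"
    and fin: "(\<integral>\<^sup>+ x. ennreal (expneg (ereal (f x) + moreau_env l g x)) \<partial>lborel) < \<infinity>"
  shows "((\<lambda>lam. tv_dist (gibbs_density (\<lambda>x. ereal (f x) + moreau_env lam g x))
                        (gibbs_density (\<lambda>x. ereal (f x) + g x))) \<longlongrightarrow> 0) (at_right 0)"
proof (rule tendsto_tv_dist_gibbs_density[where l = l])
  have [measurable]: "g \<in> borel_measurable borel"
    using lsc by (rule borel_measurable_lsc_ereal)
  show "(\<lambda>x. ereal (f x) + moreau_env lam g x) \<in> borel_measurable borel" if "0 < lam" for lam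
    using borel_measurable_moreau_env[OF that, of g] by measurable
  show "(\<lambda>x. ereal (f x) + g x) \<in> borel_measurable borel"
    by measurable
  show "ereal (f x) + moreau_env lam g x \<noteq> -\<infinity>" if "0 < lam" for lam x
    using moreau_env_ge_const[of lam m g x] that m by force
  show "ereal (f x) + moreau_env l2 g x \<le> ereal (f x) + moreau_env l1 g x"
    if "0 < l1" "l1 \<le> l2" for l1 l2 x
    using that by (intro add_left_mono moreau_env_antimono)
  show "((\<lambda>lam. ereal (f x) + moreau_env lam g x) \<longlongrightarrow> ereal (f x) + g x) (at_right 0)" for x
    using tendsto_moreau_env[of g m x, OF lsc m] m[of x]
    by (intro tendsto_add_ereal_general tendsto_const) auto
qed (rule pos l fin)+

theorem proposition1:
  fixes f :: "'a::euclidean_space \<Rightarrow> real"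
    and gradf :: "'a \<Rightarrow> 'a"
    and g :: "'a \<Rightarrow> ereal"
    and Lf :: real
  assumes f_below: "\<exists>c. \<forall>x. c \<le> f x"
    and f_convex: "convex_on UNIV f"
    and f_grad: "\<And>x. (f has_derivative (\<lambda>h. gradf x \<bullet> h)) (at x)"
    and f_cont_diff: "continuous_on UNIV gradf"
    and f_lip: "\<And>x y. norm (gradf x - gradf y) \<le> Lf * norm (x - y)"
    and g_below: "\<exists>c. \<forall>x. ereal c \<le> g x"
    and g_proper: "proper_ereal g"
    and g_convex: "convex_ereal g"
    and g_lsc: "lsc_ereal g"
    and H2: "integrable lborel (\<lambda>x. expneg (g x))
             \<or> ((\<forall>x. g x \<noteq> \<infinity>) \<and>
                (\<exists>L. \<forall>x y. \<bar>real_of_ereal (g x) - real_of_ereal (g y)\<bar> \<le> L * dist x y))"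
    and Z_pos: "0 < (\<integral>\<^sup>+ x. ennreal (expneg (ereal (f x) + g x)) \<partial>lborel)"
    and Z_fin: "(\<integral>\<^sup>+ x. ennreal (expneg (ereal (f x) + g x)) \<partial>lborel) < \<infinity>"
  shows "((\<lambda>lam. tv_dist (gibbs_density (\<lambda>x. ereal (f x) + moreau_env lam g x))
                        (gibbs_density (\<lambda>x. ereal (f x) + g x)))
          \<longlongrightarrow> 0) (at_right 0)"
proof -
  obtain mf where mf: "\<And>x. mf \<le> f x"
    using f_below by blast
  obtain m where m: "\<And>x. ereal m \<le> g x"
    using g_below by blast
  have f_meas [measurable]: "f \<in> borel_measurable borel"
    using f_grad has_derivative_continuous
    by (intro borel_measurable_continuous_onI continuous_at_imp_continuous_on) blast
  have "(\<integral>\<^sup>+ x. ennreal (expneg (ereal (f x) + moreau_env 1 g x)) \<partial>lborel) < \<infinity>"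
  proof (cases "integrable lborel (\<lambda>x. expneg (g x))")
    case True
    then have "(\<integral>\<^sup>+ x. ennreal (expneg (g x)) \<partial>lborel) < \<infinity>"
      using integrableD(2)[OF True] by (simp add: less_top)
    then show ?thesis
      using f_meas mf g_convex g_lsc m Z_pos by (intro nn_integral_expneg_add_moreau_env_finite) auto
  next
    case False
    with H2 obtain L where lip: "\<And>x y. \<bar>real_of_ereal (g x) - real_of_ereal (g y)\<bar> \<le> L * dist x y"
      and "\<And>x. g x \<noteq> \<infinity>"
      by blast
    then have finite: "\<bar>g x\<bar> \<noteq> \<infinity>" for x
      using m[of x] by (cases "g x") auto
    have "(\<integral>\<^sup>+ x. ennreal (expneg (ereal (f x) + moreau_env 1 g x)) \<partial>lborel)
            \<le> ennreal (exp (L\<^sup>2 * 1 / 2)) * (\<integral>\<^sup>+ x. ennreal (expneg (ereal (f x) + g x)) \<partial>lborel)"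
      using f_meas borel_measurable_lsc_ereal[OF g_lsc] finite lip
      by (rule nn_integral_expneg_moreau_env_le_lipschitz) simp
    also have "\<dots> < \<infinity>"
      using Z_fin by (simp add: ennreal_mult_less_top)
    finally show ?thesis .
  qed
  then show ?thesis
    using f_meas g_lsc m Z_pos by (intro tendsto_tv_dist_gibbs_moreau_env[where l = 1]) auto
qed

end
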